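(* Consider DEAREST (described in the context) run with any stepsize $\eta>0$ and any other parameters, and assume the individual functions are $L$-average smooth and $W$ satisfies the gossip assumption (both in the context). Then for every $t$, $$f(\bar x_{t+1})\le f(\bar x_t)-\frac{\eta}{2}\|\nabla f(\bar x_t)\|^2+\eta U_t+\frac{L^2\eta}{m}C_t-\Big(\frac{1}{2\eta}-\frac L2\Big)\|\bar x_{t+1}-\bar x_t\|^2,$$ where $U_t=\big\|\frac1m\sum_{i=1}^m(\mathbf{g}_t(i)-\nabla f_i(\mathbf{x}_t(i)))\big\|^2$ and $C_t=\|\mathbf{x}_t-\mathbf{1}\bar x_t\|^2+\eta^2\|\mathbf{s}_t-\mathbf{1}\bar s_t\|^2$.
   Context: Let $f_{i,j}:\mathbb{R}^d\to\mathbb{R}$ ($i\le m$, $j\le n$) be differentiable, $f_i=\frac1n\sum_j f_{i,j}$, $f=\frac1m\sum_i f_i$. $L$-average smoothness: for some $L>0$ and every $i$, $\frac1n\sum_{j=1}^n\|\nabla f_{i,j}(x)-\nabla f_{i,j}(x')\|^2\le L^2\|x-x'\|^2$ for all $x,x'$. Gossip assumption: $W\in\mathbb{R}^{m\times m}$ symmetric, $w_{ij}=0$ if agents $i,j$ are not connected, $W\mathbf{1}=\mathbf{1}$; $\lambda_2(W)$ its second-largest eigenvalue. $\|\cdot\|$ is the Frobenius/Euclidean norm. For $\mathbf{x}\in\mathbb{R}^{m\times d}$ with rows $\mathbf{x}(i)^\top$, $\bar x=\frac1m\mathbf{1}^\top\mathbf{x}$; $\nabla\mathbf{f}(\mathbf{x})$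 has rows $\nabla f_i(\mathbf{x}(i))^\top$. FastMix$(\mathbf{u}^{(0)},K)$: $\mathbf{u}^{(-1)}=\mathbf{u}^{(0)}$, $\eta_u=\frac{1-\sqrt{1-\lambda_2^2(W)}}{1+\sqrt{1-\lambda_2^2(W)}}$; for $k=0,\dots,K$: $\mathbf{u}^{(k+1)}=(1+\eta_u)W\mathbf{u}^{(k)}-\eta_u\mathbf{u}^{(k-1)}$; output $\mathbf{u}^{(K)}$. DEAREST (parameters $\bar x_0,\eta,p,b,K_{\rm in},K,\hat K,T$): $\mathbf{x}_0=\mathbf{1}\bar x_0^\top$, $\mathbf{g}_0=\nabla\mathbf{f}(\mathbf{x}_0)$, $\mathbf{s}_0=$FastMix$(\mathbf{g}_0,K_{\rm in})$. For $t=0,\dots,T-1$: $y_t\sim$Bernoulli$(p)$ shared by all agents; $K_t=K$ if $y_t=1$, else $\hat K$; $\mathbf{x}_{t+1}=$FastMix$(\mathbf{x}_t-\eta\mathbf{s}_t,K_t)$; for each $i$, $\mathbf{g}_{t+1}(i)=\nabla f_i(\mathbf{x}_{t+1}(i))$ if $y_t=1$, else $\mathbf{g}_t(i)+\frac1b\sum_{j=1}^b(\nabla f_{i,\xi_j}(\mathbf{x}_{t+1}(i))-\nabla f_{i,\xi_j}(\mathbf{x}_t(i)))$ with $\xi_j$ i.i.d. uniform on $\{1,\dots,n\}$; $\mathbf{s}_{t+1}=$FastMix$(\mathbf{s}_t+\mathbf{g}_{t+1}-\mathbf{g}_t,K_t)$. *)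

theory Defs
  imports "HOL-Analysis.Analysis" "HOL-Computational_Algebra.Polynomial"
begin

definition grad :: "('v::real_inner \<Rightarrow> real) \<Rightarrow> 'v \<Rightarrow> 'v" where
  "grad f x = (THE D. GDERIV f x :> D)"

text \<open>Eigenvalues (with multiplicity) of a real square matrix: the multiset of real roots of
  its characteristic polynomial det(X I - W); lambda_2 is the second-largest one.\<close>
definition char_poly_mat :: "real^'m^'m \<Rightarrow> real poly" where
  "char_poly_mat W = det (\<chi> i j. (if i = j then [:0, 1:] else 0) - [:W $ i $ j:])"

definition eigenvalues_desc :: "real^'m^'m \<Rightarrow> real list" where
  "eigenvalues_desc W = rev (sorted_list_of_multiset (proots (char_poly_mat W)))"

definition lambda2 :: "real^'m^'m \<Rightarrow> real" where
  "lambda2 W = eigenvalues_desc W ! 1"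

definition eta_u :: "real^'m^'m \<Rightarrow> real" where
  "eta_u W = (1 - sqrt (1 - (lambda2 W)\<^sup>2)) / (1 + sqrt (1 - (lambda2 W)\<^sup>2))"

text \<open>FastMix: pairs (u^(k-1), u^(k)); u^(-1) = u^(0).\<close>
fun fastmix_seq :: "real^'m^'m \<Rightarrow> real^'d^'m \<Rightarrow> nat \<Rightarrow> (real^'d^'m) \<times> (real^'d^'m)" where
  "fastmix_seq W u 0 = (u, u)"
| "fastmix_seq W u (Suc k) =
     (let (prev, cur) = fastmix_seq W u k
      in (cur, (1 + eta_u W) *\<^sub>R (W ** cur) - eta_u W *\<^sub>R prev))"

definition FastMix :: "real^'m^'m \<Rightarrow> real^'d^'m \<Rightarrow> nat \<Rightarrow> real^'d^'m" where
  "FastMix W u K = snd (fastmix_seq W u K)"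

definition avg :: "real^'d^'m \<Rightarrow> real^'d" where
  "avg u = (1 / real CARD('m)) *\<^sub>R (\<Sum>i\<in>UNIV. u $ i)"

definition ones_row :: "real^'d \<Rightarrow> real^'d^'m" where
  "ones_row v = (\<chi> i. v)"

definition loc_f :: "('m \<Rightarrow> 'n::finite \<Rightarrow> real^'d \<Rightarrow> real) \<Rightarrow> 'm \<Rightarrow> real^'d \<Rightarrow> real" where
  "loc_f F i z = (1 / real CARD('n)) * (\<Sum>j\<in>UNIV. F i j z)"

definition glob_f :: "('m::finite \<Rightarrow> 'n::finite \<Rightarrow> real^'d \<Rightarrow> real) \<Rightarrow> real^'d \<Rightarrow> real" where
  "glob_f F z = (1 / real CARD('m)) * (\<Sum>i\<in>UNIV. loc_f F i z)"

definition stacked_grad :: "('m::finite \<Rightarrow> 'n::finite \<Rightarrow> real^'d \<Rightarrow> real) \<Rightarrow> real^'d^'m \<Rightarrow> real^'d^'m" where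
  "stacked_grad F x = (\<chi> i. grad (loc_f F i) (x $ i))"

text \<open>One realisation of DEAREST: state (x_t, g_t, s_t). The coin flips y_t and the sampled
  indices xi t i j (j < b) are arbitrary (the statement is pathwise).\<close>
fun dearest ::
  "real^'m^'m \<Rightarrow> ('m::finite \<Rightarrow> 'n::finite \<Rightarrow> real^'d \<Rightarrow> real) \<Rightarrow> real^'d \<Rightarrow> real \<Rightarrow> nat
    \<Rightarrow> nat \<Rightarrow> nat \<Rightarrow> nat \<Rightarrow> (nat \<Rightarrow> bool) \<Rightarrow> (nat \<Rightarrow> 'm \<Rightarrow> nat \<Rightarrow> 'n) \<Rightarrow> nat
    \<Rightarrow> (real^'d^'m) \<times> (real^'d^'m) \<times> (real^'d^'m)" where
  "dearest W F xbar0 eta b Kin K Khat y xi 0 =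
     (let x0 = ones_row xbar0; g0 = stacked_grad F x0 in (x0, g0, FastMix W g0 Kin))"
| "dearest W F xbar0 eta b Kin K Khat y xi (Suc t) =
     (let (x, g, s) = dearest W F xbar0 eta b Kin K Khat y xi t;
          Kt = (if y t then K else Khat);
          x' = FastMix W (x - eta *\<^sub>R s) Kt;
          g' = (\<chi> i. if y t then grad (loc_f F i) (x' $ i)
                     else g $ i + (1 / real b) *\<^sub>R
                       (\<Sum>j<b. grad (F i (xi t i j)) (x' $ i) - grad (F i (xi t i j)) (x $ i)));
          s' = FastMix W (s + g' - g) Kt
      in (x', g', s'))"

end

theory Submission
  imports Defs
begin

text \<open>Every step of DEAREST preserves row averages (FastMix only multiplies by a column
  stochastic matrix), so the averages obey \<open>avg s\<^sub>t = avg g\<^sub>t\<close> and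
  \<open>avg x\<^sub>t\<^sub>+\<^sub>1 = avg x\<^sub>t - \<eta> avg g\<^sub>t\<close>: the mean iterate takes an inexact
  gradient step on f. The descent lemma for the L-Lipschitz gradient of f, rewritten with the
  polarisation identity, bounds the loss of that step by \<open>\<eta>/2 \<parallel>\<nabla>f(avg x\<^sub>t) - avg g\<^sub>t\<parallel>\<^sup>2\<close>.
  This error splits into the average of \<open>\<nabla>f\<^sub>i(avg x\<^sub>t) - \<nabla>f\<^sub>i(x\<^sub>t(i))\<close>,
  controlled by the consensus error through average smoothness and Jensen's inequality, and the
  term whose square is U.\<close>

lemma GDERIV_unique:
  assumes "GDERIV f x :> D" and "GDERIV f x :> D'"
  shows "D = D'"
proof -
  have "(\<lambda>h. inner h D) = (\<lambda>h. inner h D')"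
    using has_derivative_unique assms unfolding gderiv_def by blast
  then have "inner (D - D') D = inner (D - D') D'" by meson
  then have "inner (D - D') (D - D') = 0" by (simp add: inner_diff_right)
  then show ?thesis by simp
qed

lemma grad_eqI: "GDERIV f x :> D \<Longrightarrow> grad f x = D"
  unfolding grad_def using GDERIV_unique by blast

lemma GDERIV_grad:
  fixes f :: "'v::euclidean_space \<Rightarrow> real"
  assumes "f differentiable (at x)"
  shows "GDERIV f x :> grad f x"
proof -
  obtain f' where f': "(f has_derivative f') (at x)"
    using assms unfolding differentiable_def by blast
  have "f' = (\<lambda>h. inner h (adjoint f' 1))"
    using adjoint_works[OF has_derivative_linear[OF f']] by fastforce
  then have "GDERIV f x :> adjoint f' 1" unfolding gderiv_def using f' by simp
  then show ?thesis using grad_eqI by metis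
qed

lemma GDERIV_mean:
  assumes "\<And>j. j \<in> I \<Longrightarrow> GDERIV (f j) x :> D j"
  shows "GDERIV (\<lambda>z. c * (\<Sum>j\<in>I. f j z)) x :> c *\<^sub>R (\<Sum>j\<in>I. D j)"
  using assms unfolding gderiv_def
  by (cases "finite I") (auto intro!: derivative_eq_intros simp: inner_sum_right)

lemma norm_sum_power2_le:
  fixes v :: "'a \<Rightarrow> 'b::real_normed_vector"
  shows "(norm (\<Sum>i\<in>I. v i))\<^sup>2 \<le> real (card I) * (\<Sum>i\<in>I. (norm (v i))\<^sup>2)"
proof -
  have "(norm (\<Sum>i\<in>I. v i))\<^sup>2 \<le> (\<Sum>i\<in>I. 1 * norm (v i))\<^sup>2"
    by (simp add: norm_sum power_mono)
  also have "\<dots> \<le> (\<Sum>i\<in>I. 1\<^sup>2) * (\<Sum>i\<in>I. (norm (v i))\<^sup>2)"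
    by (rule Cauchy_Schwarz_ineq_sum)
  finally show ?thesis by simp
qed

lemma norm_mean_power2_le:
  fixes v :: "'a \<Rightarrow> 'b::real_normed_vector"
  shows "(norm ((1 / real (card I)) *\<^sub>R (\<Sum>i\<in>I. v i)))\<^sup>2
    \<le> (1 / real (card I)) * (\<Sum>i\<in>I. (norm (v i))\<^sup>2)"
proof (cases "card I = 0")
  case False
  have "(norm ((1 / real (card I)) *\<^sub>R (\<Sum>i\<in>I. v i)))\<^sup>2
      = (1 / real (card I))\<^sup>2 * (norm (\<Sum>i\<in>I. v i))\<^sup>2"
    by (simp add: power_divide)
  also have "\<dots> \<le> (1 / real (card I))\<^sup>2 * (real (card I) * (\<Sum>i\<in>I. (norm (v i))\<^sup>2))"
    by (rule mult_left_mono[OF norm_sum_power2_le]) simp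
  also have "\<dots> = (1 / real (card I)) * (\<Sum>i\<in>I. (norm (v i))\<^sup>2)"
    using False by (simp add: power2_eq_square)
  finally show ?thesis .
qed simp

lemma norm_add_power2_le:
  fixes a b :: "'a::real_normed_vector"
  shows "(norm (a + b))\<^sup>2 \<le> 2 * (norm a)\<^sup>2 + 2 * (norm b)\<^sup>2"
proof -
  have "(norm (a + b))\<^sup>2 \<le> (norm a + norm b)\<^sup>2"
    by (simp add: norm_triangle_ineq power_mono)
  also have "\<dots> \<le> 2 * (norm a)\<^sup>2 + 2 * (norm b)\<^sup>2"
    using zero_le_power2[of "norm a - norm b"] unfolding power2_diff power2_sum by linarith
  finally show ?thesis .
qed

lemma norm_vec_power2: "(norm (v :: ('a::real_normed_vector)^'k))\<^sup>2 = (\<Sum>i\<in>UNIV. (norm (v $ i))\<^sup>2)"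
  unfolding norm_vec_def L2_set_def by (simp add: sum_nonneg)

lemma descent_lemma:
  fixes f :: "'v::real_inner \<Rightarrow> real"
  assumes G: "\<And>z. GDERIV f z :> G z"
    and G_lipschitz: "\<And>u w. norm (G u - G w) \<le> L * norm (u - w)"
  shows "f y \<le> f x + inner (G x) (y - x) + L / 2 * (norm (y - x))\<^sup>2"
proof -
  define v where "v = y - x"
  define h where "h s = f (x + s *\<^sub>R v) - s * inner v (G x) - L / 2 * s\<^sup>2 * (norm v)\<^sup>2" for s
  have line: "((\<lambda>s. x + s *\<^sub>R v) has_derivative (\<lambda>r. r *\<^sub>R v)) (at s)" for s
    by (auto intro!: derivative_eq_intros)
  have "((\<lambda>s. f (x + s *\<^sub>R v)) has_derivative (\<lambda>r. inner (r *\<^sub>R v) (G (x + s *\<^sub>R v)))) (at s)"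
    for s
    using has_derivative_compose[OF line G[unfolded gderiv_def]] by simp
  then have segment: "((\<lambda>s. f (x + s *\<^sub>R v)) has_real_derivative inner v (G (x + s *\<^sub>R v))) (at s)"
    for s
    unfolding has_field_derivative_def by (simp add: mult.commute[of _ "v \<bullet> _"])
  have h': "(h has_real_derivative
      inner v (G (x + s *\<^sub>R v)) - inner v (G x) - L * s * (norm v)\<^sup>2) (at s)" for s
    unfolding h_def by (rule derivative_eq_intros segment | simp)+
  have "h 1 \<le> h 0"
  proof (rule DERIV_nonpos_imp_nonincreasing[of 0 1 h])
    fix s :: real
    assume s: "0 \<le> s" "s \<le> 1"
    have "inner v (G (x + s *\<^sub>R v)) - inner v (G x) = inner v (G (x + s *\<^sub>R v) - G x)"
      by (simp add: inner_diff_right)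
    also have "\<dots> \<le> norm v * norm (G (x + s *\<^sub>R v) - G x)"
      by (metis Cauchy_Schwarz_ineq2 abs_le_D1)
    also have "\<dots> \<le> norm v * (L * norm (s *\<^sub>R v))"
      using G_lipschitz[of "x + s *\<^sub>R v" x] by (simp add: mult_left_mono)
    also have "\<dots> = L * s * (norm v)\<^sup>2"
      using s by (simp add: power2_eq_square)
    finally show "\<exists>y. (h has_real_derivative y) (at s) \<and> y \<le> 0"
      using h' by fastforce
  qed simp
  then show ?thesis unfolding h_def v_def by (simp add: inner_commute)
qed

text \<open>The descent lemma for the step \<open>x' = x - \<eta> d\<close>, with the linear term rewritten by
  \<open>2 \<langle>a, b\<rangle> = \<parallel>a\<parallel>\<^sup>2 + \<parallel>b\<parallel>\<^sup>2 - \<parallel>a - b\<parallel>\<^sup>2\<close>.\<close>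
lemma inexact_gradient_step:
  fixes f :: "'v::real_inner \<Rightarrow> real"
  assumes G: "\<And>z. GDERIV f z :> G z"
    and G_lipschitz: "\<And>u w. norm (G u - G w) \<le> L * norm (u - w)"
    and eta: "eta > 0"
    and step: "x' = x - eta *\<^sub>R d"
  shows "f x' \<le> f x - eta / 2 * (norm (G x))\<^sup>2 + eta / 2 * (norm (G x - d))\<^sup>2
    - (1 / (2 * eta) - L / 2) * (norm (x' - x))\<^sup>2"
proof -
  have "inner (G x) (x' - x) = - eta / 2 * (norm (G x))\<^sup>2
      - 1 / (2 * eta) * (norm (x' - x))\<^sup>2 + eta / 2 * (norm (G x - d))\<^sup>2"
    using eta unfolding step power2_norm_eq_inner
    by (simp add: inner_diff_left inner_diff_right inner_commute field_simps power2_eq_square)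
  with descent_lemma[OF G G_lipschitz, of x' x] show ?thesis
    by (simp add: algebra_simps)
qed

context
  fixes F :: "'m::finite \<Rightarrow> 'n::finite \<Rightarrow> real^'d \<Rightarrow> real"
  assumes diff: "\<And>i j x. F i j differentiable (at x)"
begin

lemma GDERIV_loc_f:
  "GDERIV (loc_f F i) z :> (1 / real CARD('n)) *\<^sub>R (\<Sum>j\<in>UNIV. grad (F i j) z)"
  unfolding loc_f_def[abs_def] by (rule GDERIV_mean) (rule GDERIV_grad[OF diff])

lemma GDERIV_glob_f:
  "GDERIV (glob_f F) z :> (1 / real CARD('m)) *\<^sub>R (\<Sum>i\<in>UNIV. grad (loc_f F i) z)"
  unfolding glob_f_def[abs_def]
  by (rule GDERIV_mean) (simp add: grad_eqI[OF GDERIV_loc_f] GDERIV_loc_f)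

lemma grad_glob_f:
  "grad (glob_f F) z = (1 / real CARD('m)) *\<^sub>R (\<Sum>i\<in>UNIV. grad (loc_f F i) z)"
  by (rule grad_eqI[OF GDERIV_glob_f])

lemma GDERIV_glob_f_grad: "GDERIV (glob_f F) z :> grad (glob_f F) z"
  unfolding grad_glob_f by (rule GDERIV_glob_f)

context
  fixes L :: real
  assumes smooth: "\<And>i x x'. (1 / real CARD('n)) *
    (\<Sum>j\<in>UNIV. (norm (grad (F i j) x - grad (F i j) x'))\<^sup>2) \<le> L\<^sup>2 * (norm (x - x'))\<^sup>2"
begin

lemma loc_f_grad_lipschitz:
  "(norm (grad (loc_f F i) x - grad (loc_f F i) x'))\<^sup>2 \<le> L\<^sup>2 * (norm (x - x'))\<^sup>2"
proof -
  have "grad (loc_f F i) x - grad (loc_f F i) x'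
      = (1 / real CARD('n)) *\<^sub>R (\<Sum>j\<in>UNIV. grad (F i j) x - grad (F i j) x')"
    by (simp add: grad_eqI[OF GDERIV_loc_f] sum_subtractf scaleR_diff_right)
  then show ?thesis
    using norm_mean_power2_le[of UNIV "\<lambda>j. grad (F i j) x - grad (F i j) x'"] smooth[of i x x']
    by simp
qed

lemma glob_f_grad_lipschitz:
  assumes "L \<ge> 0"
  shows "norm (grad (glob_f F) x - grad (glob_f F) x') \<le> L * norm (x - x')"
proof -
  have "grad (glob_f F) x - grad (glob_f F) x'
      = (1 / real CARD('m)) *\<^sub>R (\<Sum>i\<in>UNIV. grad (loc_f F i) x - grad (loc_f F i) x')"
    by (simp add: grad_glob_f sum_subtractf scaleR_diff_right)
  then have "(norm (grad (glob_f F) x - grad (glob_f F) x'))\<^sup>2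
      \<le> (1 / real CARD('m)) * (\<Sum>i\<in>UNIV. (norm (grad (loc_f F i) x - grad (loc_f F i) x'))\<^sup>2)"
    using norm_mean_power2_le[of UNIV "\<lambda>i. grad (loc_f F i) x - grad (loc_f F i) x'"] by simp
  also have "\<dots> \<le> (1 / real CARD('m)) * (\<Sum>i\<in>(UNIV::'m set). L\<^sup>2 * (norm (x - x'))\<^sup>2)"
    by (intro mult_left_mono sum_mono loc_f_grad_lipschitz) auto
  also have "\<dots> = (L * norm (x - x'))\<^sup>2"
    by (simp add: power_mult_distrib)
  finally show ?thesis
    using assms by (simp add: power_mono_iff[symmetric])
qed

lemma grad_glob_f_avg_error:
  fixes x g :: "real^'d^'m"
  defines "m \<equiv> real CARD('m)"
  shows "(norm (grad (glob_f F) (avg x) - avg g))\<^sup>2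
    \<le> 2 * L\<^sup>2 / m * (norm (x - ones_row (avg x)))\<^sup>2
      + 2 * (norm ((1 / m) *\<^sub>R (\<Sum>i\<in>UNIV. g $ i - grad (loc_f F i) (x $ i))))\<^sup>2"
proof -
  define A where "A = (1 / m) *\<^sub>R (\<Sum>i\<in>UNIV. grad (loc_f F i) (avg x) - grad (loc_f F i) (x $ i))"
  define B where "B = (1 / m) *\<^sub>R (\<Sum>i\<in>UNIV. g $ i - grad (loc_f F i) (x $ i))"
  have "grad (glob_f F) (avg x) - avg g = A - B"
    unfolding grad_glob_f A_def B_def avg_def m_def
    by (simp add: sum_subtractf scaleR_diff_right)
  then have "(norm (grad (glob_f F) (avg x) - avg g))\<^sup>2 \<le> 2 * (norm A)\<^sup>2 + 2 * (norm B)\<^sup>2"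
    using norm_add_power2_le[of A "- B"] by simp
  moreover have "(norm A)\<^sup>2 \<le> L\<^sup>2 / m * (norm (x - ones_row (avg x)))\<^sup>2"
  proof -
    have "(norm A)\<^sup>2
        \<le> (1 / m) * (\<Sum>i\<in>UNIV. (norm (grad (loc_f F i) (avg x) - grad (loc_f F i) (x $ i)))\<^sup>2)"
      unfolding A_def m_def by (rule norm_mean_power2_le)
    also have "\<dots> \<le> (1 / m) * (\<Sum>i\<in>UNIV. L\<^sup>2 * (norm (x $ i - avg x))\<^sup>2)"
      unfolding m_def
      by (intro mult_left_mono sum_mono) (auto simp: loc_f_grad_lipschitz norm_minus_commute)
    also have "\<dots> = L\<^sup>2 / m * (norm (x - ones_row (avg x)))\<^sup>2"
      by (simp add: norm_vec_power2 ones_row_def sum_distrib_left)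
    finally show ?thesis .
  qed
  ultimately show ?thesis
    unfolding B_def by simp
qed

end

end

lemma avg_add: "avg (u + v) = avg u + avg v"
  unfolding avg_def by (simp add: sum.distrib scaleR_add_right)

lemma avg_diff: "avg (u - v) = avg u - avg v"
  unfolding avg_def by (simp add: sum_subtractf scaleR_diff_right)

lemma avg_scaleR: "avg (c *\<^sub>R u) = c *\<^sub>R avg u"
  unfolding avg_def by (simp add: scaleR_sum_right[symmetric])

lemma symmetric_stochastic_column_sum:
  fixes W :: "real^'m::finite^'m"
  assumes "transpose W = W" and "W *v (\<chi> i. 1) = (\<chi> i. 1)"
  shows "(\<Sum>i\<in>UNIV. W $ i $ k) = 1"
proof -
  have "(\<Sum>i\<in>UNIV. W $ k $ i) = 1"
    using arg_cong[OF assms(2), of "\<lambda>v. v $ k"] by (simp add: matrix_vector_mult_def)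
  moreover have "W $ k $ i = W $ i $ k" for i
    using arg_cong[OF assms(1), of "\<lambda>M. M $ i $ k"] by (simp add: transpose_def)
  ultimately show ?thesis by simp
qed

context
  fixes W :: "real^'m::finite^'m"
  assumes column_sum: "\<And>k. (\<Sum>i\<in>UNIV. W $ i $ k) = 1"
begin

lemma avg_matrix_mult: "avg (W ** u) = avg u"
proof -
  have "(\<Sum>i\<in>UNIV. (W ** u) $ i) $ j = (\<Sum>i\<in>UNIV. u $ i) $ j" for j
  proof -
    have "(\<Sum>i\<in>UNIV. (W ** u) $ i) $ j = (\<Sum>i\<in>UNIV. \<Sum>k\<in>UNIV. W $ i $ k * u $ k $ j)"
      by (simp add: matrix_matrix_mult_def)
    also have "\<dots> = (\<Sum>k\<in>UNIV. (\<Sum>i\<in>UNIV. W $ i $ k) * u $ k $ j)"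
      by (subst sum.swap) (simp add: sum_distrib_right)
    finally show ?thesis by (simp add: column_sum)
  qed
  then show ?thesis unfolding avg_def by (simp add: vec_eq_iff)
qed

lemma avg_FastMix: "avg (FastMix W u k) = avg u"
proof -
  have "avg (fst (fastmix_seq W u k)) = avg u \<and> avg (snd (fastmix_seq W u k)) = avg u"
  proof (induction k)
    case (Suc k)
    then show ?case
      by (cases "fastmix_seq W u k")
        (simp add: avg_diff avg_scaleR avg_matrix_mult avg_add algebra_simps)
  qed simp
  then show ?thesis unfolding FastMix_def by blast
qed

lemma avg_dearest_Suc:
  assumes "dearest W F xbar0 eta b Kin K Khat y xi t = (x, g, s)"
    and "dearest W F xbar0 eta b Kin K Khat y xi (Suc t) = (x', g', s')"
  shows "avg x' = avg x - eta *\<^sub>R avg s"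
    and "avg s' = avg s + avg g' - avg g"
  using assms by (auto simp: Let_def avg_FastMix avg_diff avg_add avg_scaleR)

lemma avg_dearest_tracking:
  assumes "dearest W F xbar0 eta b Kin K Khat y xi t = (x, g, s)"
  shows "avg s = avg g"
  using assms
proof (induction t arbitrary: x g s)
  case 0
  then show ?case by (auto simp: Let_def avg_FastMix)
next
  case (Suc t)
  obtain x0 g0 s0 where "dearest W F xbar0 eta b Kin K Khat y xi t = (x0, g0, s0)"
    by (metis prod_cases3)
  with Suc avg_dearest_Suc(2)[OF this Suc.prems] show ?case by simp
qed

end

theorem lemma5:
  fixes F :: "'m::finite \<Rightarrow> 'n::finite \<Rightarrow> real^'d \<Rightarrow> real"
    and W :: "real^'m^'m"
    and E :: "'m \<Rightarrow> 'm \<Rightarrow> bool"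
    and L eta p :: real
    and xbar0 :: "real^'d"
    and b Kin K Khat t :: nat
    and y :: "nat \<Rightarrow> bool"
    and xi :: "nat \<Rightarrow> 'm \<Rightarrow> nat \<Rightarrow> 'n"
  assumes diff: "\<And>i j x. F i j differentiable (at x)"
    and L_pos: "L > 0"
    and smooth: "\<And>i x x'. (1 / real CARD('n)) *
        (\<Sum>j\<in>UNIV. (norm (grad (F i j) x - grad (F i j) x'))\<^sup>2) \<le> L\<^sup>2 * (norm (x - x'))\<^sup>2"
    and W_sym: "transpose W = W"
    and W_graph: "\<And>i j. \<not> E i j \<Longrightarrow> W $ i $ j = 0"
    and W_stoch: "W *v (\<chi> i. 1) = (\<chi> i. 1)"
    and eta_pos: "eta > 0"
  defines "st \<equiv> dearest W F xbar0 eta b Kin K Khat y xi"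
  shows "let (x, g, s) = st t; (x', g', s') = st (Suc t); m = real CARD('m);
             U = (norm ((1 / m) *\<^sub>R (\<Sum>i\<in>UNIV. g $ i - grad (loc_f F i) (x $ i))))\<^sup>2;
             C = (norm (x - ones_row (avg x)))\<^sup>2 + eta\<^sup>2 * (norm (s - ones_row (avg s)))\<^sup>2
         in glob_f F (avg x') \<le> glob_f F (avg x) - eta / 2 * (norm (grad (glob_f F) (avg x)))\<^sup>2
              + eta * U + L\<^sup>2 * eta / m * C
              - (1 / (2 * eta) - L / 2) * (norm (avg x' - avg x))\<^sup>2"
proof -
  obtain x g s where st: "st t = (x, g, s)" by (metis prod_cases3)
  obtain x' g' s' where st': "st (Suc t) = (x', g', s')" by (metis prod_cases3)
  define m where "m = real CARD('m)"
  define G where "G = grad (glob_f F) (avg x)"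
  define U where "U = (norm ((1 / m) *\<^sub>R (\<Sum>i\<in>UNIV. g $ i - grad (loc_f F i) (x $ i))))\<^sup>2"
  define C where "C = (norm (x - ones_row (avg x)))\<^sup>2 + eta\<^sup>2 * (norm (s - ones_row (avg s)))\<^sup>2"
  note column_sum = symmetric_stochastic_column_sum[OF W_sym W_stoch]
  have "avg x' = avg x - eta *\<^sub>R avg g"
    using avg_dearest_Suc(1)[OF column_sum st[unfolded st_def] st'[unfolded st_def]]
      avg_dearest_tracking[OF column_sum st[unfolded st_def]] by simp
  from inexact_gradient_step[OF GDERIV_glob_f_grad[OF diff]
      glob_f_grad_lipschitz[OF diff smooth less_imp_le[OF L_pos]] eta_pos this]
  have descent: "glob_f F (avg x') \<le> glob_f F (avg x) - eta / 2 * (norm G)\<^sup>2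
      + eta / 2 * (norm (G - avg g))\<^sup>2 - (1 / (2 * eta) - L / 2) * (norm (avg x' - avg x))\<^sup>2"
    unfolding G_def .
  have "(norm (G - avg g))\<^sup>2 \<le> 2 * L\<^sup>2 / m * (norm (x - ones_row (avg x)))\<^sup>2 + 2 * U"
    unfolding G_def U_def m_def by (rule grad_glob_f_avg_error[OF diff smooth])
  also have "\<dots> \<le> 2 * L\<^sup>2 / m * C + 2 * U"
    unfolding C_def m_def by (intro add_right_mono mult_left_mono) auto
  finally have "eta / 2 * (norm (G - avg g))\<^sup>2 \<le> eta * U + L\<^sup>2 * eta / m * C"
    using mult_left_mono[of _ _ "eta / 2"] eta_pos by (fastforce simp: algebra_simps)
  then have "glob_f F (avg x') \<le> glob_f F (avg x) - eta / 2 * (norm G)\<^sup>2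
      + eta * U + L\<^sup>2 * eta / m * C - (1 / (2 * eta) - L / 2) * (norm (avg x' - avg x))\<^sup>2"
    using descent by linarith
  then show ?thesis
    unfolding st st' Let_def U_def C_def m_def G_def by simp
qed

end
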